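(* Let $\mathcal{C}$ be a translation based cipher over $V=(\mathbb{F}_2)^{mn}$ with a proper round $h$, and let $\gamma=\gamma_h$ be the bricklayer transformation of round $h$. Suppose that for some integer $r$ with $1<r<m$, each brick $\gamma_i$ of $\gamma$ is (i) differentially $2^r$-uniform and (ii) strongly $(r-1)$-anti-invariant. Then $\Gamma_h(\mathcal{C})$ is a primitive permutation group on $V$, and hence so is $\Gamma_\infty(\mathcal{C})$.
   Context: Permutations act on the right. Let $m,n>1$ and $V=V_1\oplus\dots\oplus V_n$ with each $V_i\cong(\mathbb{F}_2)^m$. For $v\in V$, $\sigma_v$ is the translation $x\mapsto x+v$. A bricklayer transformation is a permutation $\gamma$ of $V$ with permutations ("bricks") $\gamma_i$ of $V_i$ such that $(v_1+\dots+v_n)\gamma=v_1\gamma_1+\dots+v_n\gamma_n$. A wall is a nontrivial proper subspace of $V$ that is a sum of some $V_i$; $\lambda\in\mathrm{GL}(V)$ is a proper mixing layer if no wall is $\lambda$-invariant. A tb cipher $\mathcal{C}=\{\tau_k:k\in\mathcal{K}\}$ has $\tau_k=\tau_{k,1}\cdots\tau_{k,l}$ with $\tau_{k,h}=\gamma_h\lambda_h\sigma_{\phi(k,h)}$, $\gamma_h$ a key-independent bricklayer transformation with $0\gamma_h=0$, $\lambda_h\in\mathrm{GL}(V)$ key-independent, $\phi:\mathcal{K}\times\{1,\dots,l\}\to V$; a round $h$ is proper if $\lambda_h$ is a proper mixing layer and $k\mapsto\phi(k,h)$ is onto $V$, and a tb cipher has at least one proper round. $\Gamma_h(\mathcal{C})=\langle\tau_{k,h}:k\in\mathcal{K}\rangle$,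 $\Gamma_\infty(\mathcal{C})=\langle\Gamma_1(\mathcal{C}),\dots,\Gamma_l(\mathcal{C})\rangle$. For $f:(\mathbb{F}_2)^m\to(\mathbb{F}_2)^m$ and $u\in(\mathbb{F}_2)^m$, $\hat f_u(x)=f(x+u)+f(x)$. $f$ is differentially $\delta$-uniform if $|\{x:\hat f_u(x)=v\}|\le\delta$ for all $u\ne0$ and all $v$. For $1\le s<m$, $f$ is strongly $s$-anti-invariant if for any two subspaces $U,W$ of $(\mathbb{F}_2)^m$ with $f(U)=W$, either $\dim U=\dim W<m-s$ or $U=W=(\mathbb{F}_2)^m$. *)

theory Defs
  imports "HOL-Analysis.Analysis" "HOL-Library.Z2"
begin

text \<open>Brick space (F_2)^m is bit^'m; V = (F_2)^(mn) is bit^('m \<times> 'n); the i-th brick V_i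
  consists of the coordinates (j,i), j ranging over 'm.\<close>

definition brick :: "'n::finite \<Rightarrow> bit^('m \<times> 'n) \<Rightarrow> bit^'m" where
  "brick i x = (\<chi> j. x $ (j, i))"

definition bricklayer :: "('n::finite \<Rightarrow> bit^'m::finite \<Rightarrow> bit^'m) \<Rightarrow> bit^('m \<times> 'n) \<Rightarrow> bit^('m \<times> 'n)" where
  "bricklayer gs x = (\<chi> p. gs (snd p) (brick (snd p) x) $ fst p)"

definition wall :: "'n::finite set \<Rightarrow> (bit^('m::finite \<times> 'n)) set" where
  "wall I = {x. \<forall>j i. i \<notin> I \<longrightarrow> x $ (j, i) = 0}"

definition in_GL :: "(bit^'a::finite \<Rightarrow> bit^'a) \<Rightarrow> bool" where
  "in_GL f \<longleftrightarrow> Vector_Spaces.linear (*s) (*s) f \<and> bij f"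

definition proper_mixing :: "(bit^('m::finite \<times> 'n::finite) \<Rightarrow> bit^('m \<times> 'n)) \<Rightarrow> bool" where
  "proper_mixing lam \<longleftrightarrow> in_GL lam \<and>
     (\<forall>I. I \<noteq> {} \<and> I \<noteq> UNIV \<longrightarrow> \<not> (lam ` wall I \<subseteq> wall I))"

text \<open>Round map tau_{k,h} = gamma_h lambda_h sigma_{phi(k,h)} (right action: gamma_h applied first).\<close>
definition round_map ::
  "(nat \<Rightarrow> 'n::finite \<Rightarrow> bit^'m::finite \<Rightarrow> bit^'m) \<Rightarrow> (nat \<Rightarrow> bit^('m \<times> 'n) \<Rightarrow> bit^('m \<times> 'n))
   \<Rightarrow> ('k \<Rightarrow> nat \<Rightarrow> bit^('m \<times> 'n)) \<Rightarrow> 'k \<Rightarrow> nat \<Rightarrow> bit^('m \<times> 'n) \<Rightarrow> bit^('m \<times> 'n)" where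
  "round_map g lam phi k h = (\<lambda>x. lam h (bricklayer (g h) x) + phi k h)"

definition proper_round ::
  "(nat \<Rightarrow> bit^('m::finite \<times> 'n::finite) \<Rightarrow> bit^('m \<times> 'n)) \<Rightarrow> ('k \<Rightarrow> nat \<Rightarrow> bit^('m \<times> 'n)) \<Rightarrow> nat \<Rightarrow> bool" where
  "proper_round lam phi h \<longleftrightarrow> proper_mixing (lam h) \<and> surj (\<lambda>k. phi k h)"

definition tb_cipher ::
  "nat \<Rightarrow> (nat \<Rightarrow> 'n::finite \<Rightarrow> bit^'m::finite \<Rightarrow> bit^'m) \<Rightarrow> (nat \<Rightarrow> bit^('m \<times> 'n) \<Rightarrow> bit^('m \<times> 'n))
   \<Rightarrow> ('k \<Rightarrow> nat \<Rightarrow> bit^('m \<times> 'n)) \<Rightarrow> bool" where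
  "tb_cipher l g lam phi \<longleftrightarrow>
     (\<forall>h \<in> {1..l}. (\<forall>i. bij (g h i)) \<and> bricklayer (g h) 0 = 0 \<and> in_GL (lam h)) \<and>
     (\<exists>h \<in> {1..l}. proper_round lam phi h)"

inductive_set perm_group_gen :: "('a \<Rightarrow> 'a) set \<Rightarrow> ('a \<Rightarrow> 'a) set" for S where
  gen_id: "id \<in> perm_group_gen S"
| gen_mult: "f \<in> perm_group_gen S \<Longrightarrow> s \<in> S \<Longrightarrow> s \<circ> f \<in> perm_group_gen S"
| gen_inv: "f \<in> perm_group_gen S \<Longrightarrow> s \<in> S \<Longrightarrow> inv s \<circ> f \<in> perm_group_gen S"

definition Gamma_round :: "(nat \<Rightarrow> 'n::finite \<Rightarrow> bit^'m::finite \<Rightarrow> bit^'m) \<Rightarrow> (nat \<Rightarrow> bit^('m \<times> 'n) \<Rightarrow> bit^('m \<times> 'n)) \<Rightarrow> ('k \<Rightarrow> nat \<Rightarrow> bit^('m \<times> 'n)) \<Rightarrow> nat \<Rightarrow> (bit^('m \<times> 'n) \<Rightarrow> bit^('m \<times> 'n)) set" where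
  "Gamma_round g lam phi h = perm_group_gen {round_map g lam phi k h | k. True}"

definition Gamma_inf :: "nat \<Rightarrow> (nat \<Rightarrow> 'n::finite \<Rightarrow> bit^'m::finite \<Rightarrow> bit^'m) \<Rightarrow> (nat \<Rightarrow> bit^('m \<times> 'n) \<Rightarrow> bit^('m \<times> 'n)) \<Rightarrow> ('k \<Rightarrow> nat \<Rightarrow> bit^('m \<times> 'n)) \<Rightarrow> (bit^('m \<times> 'n) \<Rightarrow> bit^('m \<times> 'n)) set" where
  "Gamma_inf l g lam phi = perm_group_gen {round_map g lam phi k h | k h. h \<in> {1..l}}"

definition transitive_group :: "('a \<Rightarrow> 'a) set \<Rightarrow> bool" where
  "transitive_group G \<longleftrightarrow> (\<forall>x y. \<exists>f \<in> G. f x = y)"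

definition is_block :: "('a \<Rightarrow> 'a) set \<Rightarrow> 'a set \<Rightarrow> bool" where
  "is_block G B \<longleftrightarrow> (\<forall>f \<in> G. f ` B = B \<or> f ` B \<inter> B = {})"

definition primitive_group :: "('a \<Rightarrow> 'a) set \<Rightarrow> bool" where
  "primitive_group G \<longleftrightarrow> transitive_group G \<and>
     (\<forall>B. B \<noteq> {} \<and> is_block G B \<longrightarrow> card B = 1 \<or> B = UNIV)"

definition diff_uniform :: "nat \<Rightarrow> (bit^'m::finite \<Rightarrow> bit^'m) \<Rightarrow> bool" where
  "diff_uniform \<delta> f \<longleftrightarrow> (\<forall>u v. u \<noteq> 0 \<longrightarrow> card {x. f (x + u) + f x = v} \<le> \<delta>)"

definition strongly_anti_invariant :: "nat \<Rightarrow> (bit^'m::finite \<Rightarrow> bit^'m) \<Rightarrow> bool" where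
  "strongly_anti_invariant s f \<longleftrightarrow>
     (\<forall>U W. vec.subspace U \<and> vec.subspace W \<and> f ` U = W \<longrightarrow>
        (vec.dim U = vec.dim W \<and> vec.dim W < CARD('m) - s) \<or> (U = UNIV \<and> W = UNIV))"

end

(*
  The keys of the proper round h run through all of V, so Gamma_h contains every translation
  together with rho = lambda_h o gamma_h.  A block B through b then gives the subspace
  U = B + b whose rho-derivatives rho (x + u) + rho x stay in U; equivalently, the derivatives of
  gamma in directions of U lie in W = lambda_h^-1 U, a subspace of the same size.

  Brick by brick: if some u in U has nonzero i-th brick, the derivative of gamma_i in that
  direction cannot be constant (differential 2^r-uniformity), which yields a nonzero vector in
  the slice U_i of U; the derivative in its direction takes nonzero values in W_i = gamma_i U_i,
  each at most 2^r times, so |W_i| > 2^(m-r) and strong (r-1)-anti-invariance forces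
  U_i = W_i = (F_2)^m.  Hence U is a wall, gamma fixes it, W = U, and lambda_h fixes a wall; as
  lambda_h is a proper mixing layer, U = 0 or U = V, i.e. B is trivial.
*)

theory Submission
  imports Defs
begin

section \<open>Binary vector spaces\<close>

lemma UNIV_bit: "(UNIV :: bit set) = {0, 1}"
  by (auto intro: bit.exhaust)

instance bit :: finite
  by standard (simp add: UNIV_bit)

lemma card_bit [simp]: "CARD(bit) = 2"
  by (simp add: UNIV_bit)

lemma bitvec_add_self [simp]: "(x :: bit^'a) + x = 0"
  by (simp add: vec_eq_iff)

lemma bitvec_add_cancel_left [simp]: "(x :: bit^'a) + (x + y) = y"
  by (metis add.assoc add.left_neutral bitvec_add_self)

lemma bitvec_add_eq_0_iff: "(x :: bit^'a) + y = 0 \<longleftrightarrow> x = y"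
  by (metis bitvec_add_cancel_left add.right_neutral bitvec_add_self)

lemma subspace_bitvecI:
  fixes S :: "(bit^'a) set"
  assumes "0 \<in> S" and "\<And>x y. x \<in> S \<Longrightarrow> y \<in> S \<Longrightarrow> x + y \<in> S"
  shows "vec.subspace S"
  unfolding vec.subspace_def
proof (intro conjI ballI allI assms)
  fix c :: bit and x assume "x \<in> S"
  then show "c *s x \<in> S" using assms(1) by (cases c) auto
qed

lemma card_subspace_bitvec_le:
  fixes S :: "(bit^'a::finite) set"
  assumes "vec.subspace S"
  shows "card S \<le> 2 ^ vec.dim S"
proof -
  obtain B where B: "B \<subseteq> S" "S \<subseteq> vec.span B" "card B = vec.dim S"
    by (rule vec.basis_exists)
  have "vec.span B \<subseteq> sum id ` Pow B"
  proof
    fix x assume "x \<in> vec.span B"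
    then obtain u where x: "x = (\<Sum>v\<in>B. u v *s v)" using vec.span_finite[of B] by auto
    also have "\<dots> = (\<Sum>v\<in>B. if u v = 1 then v else 0)"
      by (rule sum.cong) (auto split: bit.split)
    also have "\<dots> = sum id {v\<in>B. u v = 1}" by (simp add: sum.inter_filter)
    finally show "x \<in> sum id ` Pow B" by auto
  qed
  then have "card S \<le> card (sum id ` Pow B)"
    using B(2) by (intro card_mono) auto
  also have "\<dots> \<le> card (Pow B)" by (rule card_image_le) simp
  also have "\<dots> = 2 ^ vec.dim S" using B(3) by (simp add: card_Pow)
  finally show ?thesis .
qed

section \<open>Differential uniformity and anti-invariance of a single brick\<close>

lemma diff_uniform_card_le:
  fixes f :: "bit^'m::finite \<Rightarrow> bit^'m"
  assumes "diff_uniform \<delta> f" and "d \<noteq> 0" and "\<And>y. f (y + d) + f y \<in> S"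
  shows "CARD(bit^'m) \<le> card S * \<delta>"
proof -
  have "UNIV = (\<Union>v\<in>S. {y. f (y + d) + f y = v})" using assms(3) by auto
  then have "CARD(bit^'m) = card (\<Union>v\<in>S. {y. f (y + d) + f y = v})" by simp
  also have "\<dots> \<le> (\<Sum>v\<in>S. card {y. f (y + d) + f y = v})" by (rule card_UN_le) simp
  also have "\<dots> \<le> (\<Sum>v\<in>S. \<delta>)"
    by (rule sum_mono) (use assms(1,2) in \<open>simp add: diff_uniform_def\<close>)
  finally show ?thesis by simp
qed

lemma diff_uniform_derivative_nonconstant:
  fixes f :: "bit^'m::finite \<Rightarrow> bit^'m"
  assumes "diff_uniform \<delta> f" and "\<delta> < 2 ^ CARD('m)" and "d \<noteq> 0"
  obtains y where "f (y + d) + f y \<noteq> v"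
proof -
  have "\<not> CARD(bit^'m) \<le> card {v} * \<delta>" using assms(2) by simp
  then show ?thesis using diff_uniform_card_le[OF assms(1,3)] that by blast
qed

lemma anti_invariant_subspace_full:
  fixes f :: "bit^'m::finite \<Rightarrow> bit^'m"
  assumes "inj f" and "diff_uniform (2 ^ r) f" and "strongly_anti_invariant (r - 1) f"
    and "1 \<le> r" and "r < CARD('m)"
    and U: "vec.subspace U" and W: "vec.subspace W" and "f ` U = W"
    and "d \<in> U" and "d \<noteq> 0" and deriv: "\<And>y. f (y + d) + f y \<in> W"
  shows "U = UNIV"
proof (rule ccontr)
  assume "U \<noteq> UNIV"
  then have "vec.dim W < CARD('m) - (r - 1)"
    using assms(3,8) U W unfolding strongly_anti_invariant_def by blast
  then have "vec.dim W \<le> CARD('m) - r" using assms(4) by linarith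
  then have "2 ^ vec.dim W \<le> (2::nat) ^ (CARD('m) - r)" by (rule power_increasing) simp
  then have "card W \<le> 2 ^ (CARD('m) - r)"
    using card_subspace_bitvec_le[OF W] by linarith
  moreover have "0 \<in> W" using W by (rule vec.subspace_0)
  then have "card W > 0" by (metis card_gt_0_iff empty_iff finite)
  ultimately have "card (W - {0}) < 2 ^ (CARD('m) - r)"
    using \<open>0 \<in> W\<close> by (simp add: card_Diff_singleton)
  then have "card (W - {0}) * 2 ^ r < 2 ^ (CARD('m) - r) * 2 ^ r"
    by (rule mult_strict_right_mono) simp
  also have "\<dots> = 2 ^ CARD('m)" using assms(5) by (simp flip: power_add)
  finally have "card (W - {0}) * 2 ^ r < CARD(bit^'m)" by simp
  moreover have "f (y + d) + f y \<in> W - {0}" for y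
    using deriv assms(1,10) by (auto simp: bitvec_add_eq_0_iff inj_eq)
  ultimately show False using diff_uniform_card_le[OF assms(2,10)] by (meson not_le)
qed

section \<open>Bricks and walls\<close>

definition brick_emb :: "'n::finite \<Rightarrow> bit^'m::finite \<Rightarrow> bit^('m \<times> 'n)" where
  "brick_emb i y = (\<chi> p. if snd p = i then y $ fst p else 0)"

definition brick_slice :: "'n::finite \<Rightarrow> (bit^('m::finite \<times> 'n)) set \<Rightarrow> (bit^'m) set" where
  "brick_slice i U = {y. brick_emb i y \<in> U}"

lemma brick_add [simp]: "brick i (x + y) = brick i x + brick i y"
  by (simp add: brick_def vec_eq_iff)

lemma brick_zero [simp]: "brick i 0 = 0"
  by (simp add: brick_def vec_eq_iff)

lemma brick_bricklayer [simp]: "brick i (bricklayer gs x) = gs i (brick i x)"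
  by (simp add: brick_def bricklayer_def vec_eq_iff)

lemma brick_brick_emb [simp]: "brick j (brick_emb i y) = (if j = i then y else 0)"
  by (simp add: brick_def brick_emb_def vec_eq_iff)

lemma vec_eq_brickI:
  fixes x y :: "bit^('m::finite \<times> 'n::finite)"
  assumes "\<And>i. brick i x = brick i y"
  shows "x = y"
proof (rule vec_eq_iff[THEN iffD2], rule allI)
  fix p :: "'m \<times> 'n"
  have "brick (snd p) x $ fst p = brick (snd p) y $ fst p" using assms by simp
  then show "x $ p = y $ p" by (simp add: brick_def)
qed

lemma brick_emb_add: "brick_emb i (a + b) = brick_emb i a + brick_emb i b"
  by (rule vec_eq_brickI) simp

lemma brick_emb_zero [simp]: "brick_emb i 0 = 0"
  by (rule vec_eq_brickI) simp

lemma subspace_brick_slice: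
  assumes "vec.subspace U"
  shows "vec.subspace (brick_slice i U)"
  using assms by (intro subspace_bitvecI)
    (auto simp: brick_slice_def brick_emb_add vec.subspace_0 vec.subspace_add)

lemma bricklayer_zero: "(\<And>i. gs i 0 = 0) \<Longrightarrow> bricklayer gs 0 = 0"
  by (rule vec_eq_brickI) simp

lemma bricklayer_brick_emb:
  "(\<And>i. gs i 0 = 0) \<Longrightarrow> bricklayer gs (brick_emb i y) = brick_emb i (gs i y)"
  by (rule vec_eq_brickI) simp

lemma inj_bricklayer:
  assumes "\<And>i. inj (gs i)"
  shows "inj (bricklayer gs)"
proof (rule injI)
  fix x y assume "bricklayer gs x = bricklayer gs y"
  then have "gs i (brick i x) = gs i (brick i y)" for i
    by (metis brick_bricklayer)
  then show "x = y" using assms by (intro vec_eq_brickI) (simp add: inj_eq)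
qed

lemma bricklayer_image_brick_slice:
  assumes inj: "\<And>i. inj (gs i)" and zero: "\<And>i. gs i 0 = 0" and "bricklayer gs ` U = W"
  shows "gs i ` brick_slice i U = brick_slice i W"
proof
  show "gs i ` brick_slice i U \<subseteq> brick_slice i W"
    using assms(3) zero by (auto simp: brick_slice_def bricklayer_brick_emb[where gs=gs, symmetric])
  show "brick_slice i W \<subseteq> gs i ` brick_slice i U"
  proof
    fix w assume "w \<in> brick_slice i W"
    then obtain u where u: "u \<in> U" and w: "brick_emb i w = bricklayer gs u"
      using assms(3) by (auto simp: brick_slice_def)
    have "gs j (brick j u) = gs j 0" if "j \<noteq> i" for j
      using arg_cong[OF w, of "brick j"] that zero by simp
    then have "u = brick_emb i (brick i u)"
      using inj by (intro vec_eq_brickI) (simp add: inj_eq)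
    moreover have "w = gs i (brick i u)"
      using arg_cong[OF w, of "brick i"] by simp
    ultimately show "w \<in> gs i ` brick_slice i U"
      using u by (auto simp: brick_slice_def)
  qed
qed

lemma mem_wall_iff: "x \<in> wall I \<longleftrightarrow> (\<forall>i. i \<notin> I \<longrightarrow> brick i x = 0)"
  by (auto simp: wall_def brick_def vec_eq_iff)

lemma wall_empty: "wall {} = {0}"
  by (auto simp: mem_wall_iff intro: vec_eq_brickI)

lemma wall_UNIV: "wall UNIV = UNIV"
  by (auto simp: mem_wall_iff)

lemma bricklayer_wall_subset: "(\<And>i. gs i 0 = 0) \<Longrightarrow> bricklayer gs ` wall I \<subseteq> wall I"
  by (auto simp: mem_wall_iff)

lemma wall_eq_sum_brick_emb:
  assumes "x \<in> wall I"
  shows "x = (\<Sum>i\<in>I. brick_emb i (brick i x))"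
  using assms by (auto simp: vec_eq_iff sum_component brick_emb_def brick_def wall_def)

lemma wall_subset_subspace:
  fixes U :: "(bit^('m::finite \<times> 'n::finite)) set"
  assumes "vec.subspace U" and "\<And>i (y :: bit^'m). i \<in> I \<Longrightarrow> brick_emb i y \<in> U"
  shows "wall I \<subseteq> U"
proof
  fix x :: "bit^('m \<times> 'n)"
  assume "x \<in> wall I"
  then have "x = (\<Sum>i\<in>I. brick_emb i (brick i x))" by (rule wall_eq_sum_brick_emb)
  also have "\<dots> \<in> U" using assms by (intro vec.subspace_sum) auto
  finally show "x \<in> U" .
qed

section \<open>Subspaces closed under the derivatives of a round\<close>

lemma bricklayer_derivative_brick_emb:
  assumes "\<And>i. gs i 0 = 0"
  shows "bricklayer gs (brick_emb i y + brick_emb i d) + bricklayer gs (brick_emb i y)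
    = brick_emb i (gs i (y + d) + gs i y)"
  using assms by (intro vec_eq_brickI) simp

lemma brick_slice_nonzero:
  fixes gs :: "'n::finite \<Rightarrow> bit^'m::finite \<Rightarrow> bit^'m" and U W :: "(bit^('m \<times> 'n)) set"
  assumes inj: "\<And>i. inj (gs i)" and zero: "\<And>i. gs i 0 = 0"
    and du: "diff_uniform (2 ^ r) (gs i)" and "r < CARD('m)"
    and W: "vec.subspace W" and image: "bricklayer gs ` U = W"
    and deriv: "\<And>x u. u \<in> U \<Longrightarrow> bricklayer gs (x + u) + bricklayer gs x \<in> W"
    and "u \<in> U" and "brick i u \<noteq> 0"
  obtains d where "d \<in> brick_slice i U" and "d \<noteq> 0"
proof (rule ccontr)
  let ?f = "gs i" and ?\<gamma> = "bricklayer gs" and ?a = "brick i u"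
  assume "\<not> thesis"
  then have "brick_slice i U \<subseteq> {0}" using that by blast
  then have "brick_slice i W \<subseteq> ?f ` {0}"
    unfolding bricklayer_image_brick_slice[OF inj zero image, symmetric] by (rule image_mono)
  then have W_slice: "brick_slice i W \<subseteq> {0}" using zero[of i] by simp
  have "?f (y + ?a) + ?f y = ?f ?a" for y
  proof -
    have "brick_emb i (?f (y + ?a) + ?f y + ?f ?a)
        = ?\<gamma> (brick_emb i y + u) + ?\<gamma> (brick_emb i y) + (?\<gamma> (0 + u) + ?\<gamma> 0)"
      using zero by (intro vec_eq_brickI) simp
    also have "\<dots> \<in> W"
      by (rule vec.subspace_add[OF W deriv[OF \<open>u \<in> U\<close>] deriv[OF \<open>u \<in> U\<close>]])
    finally have "?f (y + ?a) + ?f y + ?f ?a = 0"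
      using W_slice by (auto simp: brick_slice_def)
    then show ?thesis by (simp add: bitvec_add_eq_0_iff)
  qed
  moreover have "(2::nat) ^ r < 2 ^ CARD('m)" using \<open>r < CARD('m)\<close> by simp
  ultimately show False
    using diff_uniform_derivative_nonconstant[OF du _ \<open>brick i u \<noteq> 0\<close>] by metis
qed

lemma brick_slice_eq_UNIV:
  fixes gs :: "'n::finite \<Rightarrow> bit^'m::finite \<Rightarrow> bit^'m" and U W :: "(bit^('m \<times> 'n)) set"
  assumes inj: "\<And>i. inj (gs i)" and zero: "\<And>i. gs i 0 = 0"
    and du: "diff_uniform (2 ^ r) (gs i)" and sai: "strongly_anti_invariant (r - 1) (gs i)"
    and "1 \<le> r" and "r < CARD('m)"
    and U: "vec.subspace U" and W: "vec.subspace W" and image: "bricklayer gs ` U = W"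
    and deriv: "\<And>x u. u \<in> U \<Longrightarrow> bricklayer gs (x + u) + bricklayer gs x \<in> W"
    and "u \<in> U" and "brick i u \<noteq> 0"
  shows "brick_slice i U = UNIV"
proof -
  obtain d where "d \<in> brick_slice i U" and "d \<noteq> 0"
    using brick_slice_nonzero[OF inj zero du \<open>r < CARD('m)\<close> W image deriv \<open>u \<in> U\<close>
        \<open>brick i u \<noteq> 0\<close>] .
  moreover have "gs i (y + d) + gs i y \<in> brick_slice i W" for y
    using deriv[of "brick_emb i d" "brick_emb i y"] \<open>d \<in> brick_slice i U\<close> zero
    by (simp add: brick_slice_def bricklayer_derivative_brick_emb)
  ultimately show ?thesis
    using inj du sai \<open>1 \<le> r\<close> \<open>r < CARD('m)\<close> subspace_brick_slice[OF U]
      subspace_brick_slice[OF W] bricklayer_image_brick_slice[OF inj zero image]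
    by (intro anti_invariant_subspace_full[where f = "gs i" and d = d]) auto
qed

lemma bricklayer_image_eq:
  fixes gs :: "'n::finite \<Rightarrow> bit^'m::finite \<Rightarrow> bit^'m" and U W :: "(bit^('m \<times> 'n)) set"
  assumes "\<And>i. inj (gs i)" and "\<And>i. gs i 0 = 0" and "card W = card U"
    and deriv: "\<And>x u. u \<in> U \<Longrightarrow> bricklayer gs (x + u) + bricklayer gs x \<in> W"
  shows "bricklayer gs ` U = W"
proof (rule card_subset_eq)
  show "bricklayer gs ` U \<subseteq> W"
    using deriv[of _ 0] bricklayer_zero[of gs] assms(2) by auto
  show "card (bricklayer gs ` U) = card W"
    using assms(3) inj_bricklayer[of gs] assms(1) by (simp add: card_image inj_on_subset)
qed simp

lemma derivative_invariant_subspace_eq_wall: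
  fixes gs :: "'n::finite \<Rightarrow> bit^'m::finite \<Rightarrow> bit^'m" and U W :: "(bit^('m \<times> 'n)) set"
  assumes "\<And>i. inj (gs i)" and "\<And>i. gs i 0 = 0"
    and "\<And>i. diff_uniform (2 ^ r) (gs i)" and "\<And>i. strongly_anti_invariant (r - 1) (gs i)"
    and "1 \<le> r" and "r < CARD('m)"
    and U: "vec.subspace U" and "vec.subspace W" and "bricklayer gs ` U = W"
    and "\<And>x u. u \<in> U \<Longrightarrow> bricklayer gs (x + u) + bricklayer gs x \<in> W"
  shows "U = wall {i. \<exists>u\<in>U. brick i u \<noteq> 0}"
proof
  show "U \<subseteq> wall {i. \<exists>u\<in>U. brick i u \<noteq> 0}" by (auto simp: mem_wall_iff)
  show "wall {i. \<exists>u\<in>U. brick i u \<noteq> 0} \<subseteq> U"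
    using brick_slice_eq_UNIV[OF assms]
    by (intro wall_subset_subspace[OF U]) (auto simp: brick_slice_def)
qed

lemma derivative_invariant_subspace_trivial:
  fixes gs :: "'n::finite \<Rightarrow> bit^'m::finite \<Rightarrow> bit^'m"
    and lam :: "bit^('m \<times> 'n) \<Rightarrow> bit^('m \<times> 'n)" and U :: "(bit^('m \<times> 'n)) set"
  assumes inj: "\<And>i. inj (gs i)" and zero: "\<And>i. gs i 0 = 0"
    and du: "\<And>i. diff_uniform (2 ^ r) (gs i)" and sai: "\<And>i. strongly_anti_invariant (r - 1) (gs i)"
    and r: "1 \<le> r" "r < CARD('m)"
    and mixing: "proper_mixing lam" and U: "vec.subspace U"
    and deriv: "\<And>x u. u \<in> U \<Longrightarrow> lam (bricklayer gs (x + u)) + lam (bricklayer gs x) \<in> U"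
  shows "U = {0} \<or> U = UNIV"
proof -
  let ?\<gamma> = "bricklayer gs"
  have lin: "Vector_Spaces.linear (*s) (*s) lam" and "bij lam"
    using mixing by (auto simp: proper_mixing_def in_GL_def)
  define W where "W = lam -` U"
  have W: "vec.subspace W"
    unfolding W_def by (rule module_hom.subspace_vimage[OF module_hom_linearI[OF lin] U])
  have card_W: "card W = card U"
    unfolding W_def using \<open>bij lam\<close> by (simp add: card_vimage_inj bij_is_inj bij_is_surj)
  have deriv_W: "?\<gamma> (x + u) + ?\<gamma> x \<in> W" if "u \<in> U" for x u
    using deriv[OF that] by (simp add: W_def vec.linear_add[OF lin])
  have image: "?\<gamma> ` U = W"
    using inj zero card_W deriv_W by (rule bricklayer_image_eq)
  define I where "I = {i. \<exists>u\<in>U. brick i u \<noteq> 0}"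
  have U_wall: "U = wall I"
    unfolding I_def using inj zero du sai r U W image deriv_W
    by (rule derivative_invariant_subspace_eq_wall)
  have "W \<subseteq> U"
    using image bricklayer_wall_subset[of gs I] zero U_wall by simp
  then have "W = U" using card_W by (simp add: card_subset_eq)
  then have "lam ` wall I \<subseteq> wall I" using U_wall by (auto simp: W_def)
  then have "I = {} \<or> I = UNIV" using mixing by (auto simp: proper_mixing_def)
  then show ?thesis using U_wall by (auto simp: wall_empty wall_UNIV)
qed

section \<open>Primitivity of groups containing the translations\<close>

lemma perm_group_gen_comp:
  "f \<in> perm_group_gen S \<Longrightarrow> g \<in> perm_group_gen S \<Longrightarrow> f \<circ> g \<in> perm_group_gen S"
  by (induction f rule: perm_group_gen.induct)
    (auto simp: comp_assoc intro: perm_group_gen.intros)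

lemma perm_group_gen_generator: "s \<in> S \<Longrightarrow> s \<in> perm_group_gen S"
  using perm_group_gen.gen_mult[OF perm_group_gen.gen_id] by simp

lemma perm_group_gen_mono:
  assumes "S \<subseteq> T"
  shows "perm_group_gen S \<subseteq> perm_group_gen T"
proof
  fix f assume "f \<in> perm_group_gen S"
  then show "f \<in> perm_group_gen T"
    by induction (use assms in \<open>blast intro: perm_group_gen.intros\<close>)+
qed

lemma perm_group_gen_translation:
  fixes rho :: "'a \<Rightarrow> 'a::plus"
  assumes "surj rho" and "rho \<in> S" and "(\<lambda>x. rho x + v) \<in> S"
  shows "(\<lambda>x. x + v) \<in> perm_group_gen S"
proof -
  have "(\<lambda>x. rho x + v) \<circ> (inv rho \<circ> id) \<in> perm_group_gen S"
    using assms(2,3) by (intro perm_group_gen.intros)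
  moreover have "(\<lambda>x. rho x + v) \<circ> (inv rho \<circ> id) = (\<lambda>x. x + v)"
    using assms(1) by (simp add: fun_eq_iff surj_f_inv_f)
  ultimately show ?thesis by simp
qed

lemma primitive_group_mono:
  assumes "primitive_group G" and "G \<subseteq> H"
  shows "primitive_group H"
proof -
  have "transitive_group H" using assms unfolding primitive_group_def transitive_group_def by blast
  moreover have "is_block G B" if "is_block H B" for B
    using that assms(2) unfolding is_block_def by blast
  ultimately show ?thesis using assms(1) unfolding primitive_group_def by blast
qed

lemma transitive_groupI_translations:
  fixes G :: "('a::group_add \<Rightarrow> 'a) set"
  assumes "\<And>v. (\<lambda>x. x + v) \<in> G"
  shows "transitive_group G"
  unfolding transitive_group_def
proof (intro allI)
  fix x y :: 'a
  show "\<exists>f\<in>G. f x = y" using assms by (intro bexI[where x = "\<lambda>z. z + (- x + y)"]) simp_all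
qed

lemma block_image_eq:
  "is_block G B \<Longrightarrow> f \<in> G \<Longrightarrow> z \<in> B \<Longrightarrow> f z \<in> B \<Longrightarrow> f ` B = B"
  unfolding is_block_def by blast

lemma subspace_block_differences:
  fixes G :: "(bit^'a::finite \<Rightarrow> bit^'a) set"
  assumes block: "is_block G B" and transl: "\<And>v. (\<lambda>x. x + v) \<in> G" and "b \<in> B"
  shows "vec.subspace {u. b + u \<in> B}"
proof (rule subspace_bitvecI)
  show "0 \<in> {u. b + u \<in> B}" using \<open>b \<in> B\<close> by simp
  fix u v assume "u \<in> {u. b + u \<in> B}" and "v \<in> {u. b + u \<in> B}"
  then have "(\<lambda>z. z + u) b \<in> B" and v: "b + v \<in> B" by (simp_all add: add.commute)
  then have "(\<lambda>z. z + u) ` B = B" using block transl \<open>b \<in> B\<close> by (intro block_image_eq)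
  then have "(\<lambda>z. z + u) (b + v) \<in> B" using v by blast
  then show "u + v \<in> {u. b + u \<in> B}" by (simp add: add_ac)
qed

lemma block_differences_derivative:
  fixes G :: "(bit^'a::finite \<Rightarrow> bit^'a) set"
  assumes block: "is_block G B" and comp: "\<And>f g. f \<in> G \<Longrightarrow> g \<in> G \<Longrightarrow> f \<circ> g \<in> G"
    and transl: "\<And>v. (\<lambda>x. x + v) \<in> G" and "rho \<in> G"
    and "b \<in> B" and "b + u \<in> B"
  shows "b + (rho (x + u) + rho x) \<in> B"
proof -
  \<comment> \<open>rho conjugated by translations, chosen to fix b\<close>
  let ?f = "(\<lambda>y. y + (rho x + b)) \<circ> rho \<circ> (\<lambda>y. y + (x + b))"
  have "?f \<in> G" using comp transl \<open>rho \<in> G\<close> by blast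
  have "?f b = b"
  proof -
    have "b + (x + b) = x" by (metis add.commute bitvec_add_cancel_left)
    then have "?f b = rho x + (rho x + b)" by (simp only: comp_def add.commute)
    then show ?thesis by simp
  qed
  then have "?f b \<in> B" using \<open>b \<in> B\<close> by (simp only:)
  with block \<open>?f \<in> G\<close> \<open>b \<in> B\<close> have "?f ` B = B" by (rule block_image_eq)
  then have "?f (b + u) \<in> B" using \<open>b + u \<in> B\<close> by blast
  moreover have "b + u + (x + b) = x + u"
    by (metis add.commute add.left_commute bitvec_add_cancel_left)
  then have "?f (b + u) = b + (rho (x + u) + rho x)" by (simp only: comp_def add_ac)
  ultimately show ?thesis by (simp only:)
qed

lemma primitive_groupI_translations:
  fixes G :: "(bit^'a::finite \<Rightarrow> bit^'a) set"
  assumes comp: "\<And>f g. f \<in> G \<Longrightarrow> g \<in> G \<Longrightarrow> f \<circ> g \<in> G"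
    and transl: "\<And>v. (\<lambda>x. x + v) \<in> G" and "rho \<in> G"
    and trivial: "\<And>U. vec.subspace U \<Longrightarrow> (\<And>x u. u \<in> U \<Longrightarrow> rho (x + u) + rho x \<in> U)
      \<Longrightarrow> U = {0} \<or> U = UNIV"
  shows "primitive_group G"
  unfolding primitive_group_def
proof (intro conjI allI impI)
  show "transitive_group G" using transl by (rule transitive_groupI_translations)
  fix B assume "B \<noteq> {} \<and> is_block G B"
  then obtain b where "b \<in> B" and block: "is_block G B" by blast
  have B_eq: "(\<lambda>u. b + u) ` {u. b + u \<in> B} = B"
  proof
    show "B \<subseteq> (\<lambda>u. b + u) ` {u. b + u \<in> B}"
    proof
      fix y assume "y \<in> B"
      then show "y \<in> (\<lambda>u. b + u) ` {u. b + u \<in> B}" by (intro image_eqI[where x = "b + y"]) simp_all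
    qed
  qed auto
  have "{u. b + u \<in> B} = {0} \<or> {u. b + u \<in> B} = UNIV"
    using block_differences_derivative[OF block comp transl \<open>rho \<in> G\<close> \<open>b \<in> B\<close>]
    by (intro trivial subspace_block_differences[OF block transl \<open>b \<in> B\<close>]) simp
  then show "card B = 1 \<or> B = UNIV"
  proof
    assume "{u. b + u \<in> B} = {0}"
    then have "B = {b}" using B_eq by simp
    then show ?thesis by simp
  next
    assume "{u. b + u \<in> B} = UNIV"
    then have "B = range (\<lambda>u. b + u)" using B_eq by simp
    moreover have "surj (\<lambda>u. b + u)" by (rule surjI[where f = "\<lambda>u. b + u"]) simp
    ultimately show ?thesis by simp
  qed
qed

lemma primitive_group_translates:
  fixes rho :: "bit^'a::finite \<Rightarrow> bit^'a"
  assumes "surj rho"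
    and "\<And>U. vec.subspace U \<Longrightarrow> (\<And>x u. u \<in> U \<Longrightarrow> rho (x + u) + rho x \<in> U)
      \<Longrightarrow> U = {0} \<or> U = UNIV"
  shows "primitive_group (perm_group_gen {\<lambda>x. rho x + v | v. True})"
proof -
  let ?S = "{\<lambda>x. rho x + v | v. True}"
  have "rho \<in> ?S" by force
  show ?thesis
  proof (rule primitive_groupI_translations[OF perm_group_gen_comp _ _ assms(2)])
    show "(\<lambda>x. x + v) \<in> perm_group_gen ?S" for v
      using \<open>surj rho\<close> \<open>rho \<in> ?S\<close> by (rule perm_group_gen_translation) auto
    show "rho \<in> perm_group_gen ?S" using \<open>rho \<in> ?S\<close> by (rule perm_group_gen_generator)
  qed
qed

theorem theorem3p1:
  fixes l h r :: nat
    and g :: "nat \<Rightarrow> 'n::finite \<Rightarrow> bit^'m::finite \<Rightarrow> bit^'m"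
    and lam :: "nat \<Rightarrow> bit^('m \<times> 'n) \<Rightarrow> bit^('m \<times> 'n)"
    and phi :: "'k \<Rightarrow> nat \<Rightarrow> bit^('m \<times> 'n)"
  assumes "CARD('m) > 1" and "CARD('n) > 1"
    and "tb_cipher l g lam phi"
    and "h \<in> {1..l}" and "proper_round lam phi h"
    and "1 < r" and "r < CARD('m)"
    and "\<forall>i. diff_uniform (2 ^ r) (g h i)"
    and "\<forall>i. strongly_anti_invariant (r - 1) (g h i)"
  shows "primitive_group (Gamma_round g lam phi h) \<and> primitive_group (Gamma_inf l g lam phi)"
proof -
  have bij: "\<And>i. bij (g h i)" and "bricklayer (g h) 0 = 0" and "in_GL (lam h)"
    using assms(3,4) by (auto simp: tb_cipher_def)
  then have zero: "g h i 0 = 0" for i by (metis brick_bricklayer brick_zero)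
  have mixing: "proper_mixing (lam h)" and keys: "surj (\<lambda>k. phi k h)"
    using assms(5) by (auto simp: proper_round_def)
  define rho where "rho = lam h \<circ> bricklayer (g h)"
  have rounds: "{round_map g lam phi k h | k. True} = {\<lambda>x. rho x + v | v. True}"
    using keys by (auto simp: round_map_def rho_def surj_def) metis
  have "surj (bricklayer (g h))"
    using inj_bricklayer[of "g h"] bij by (simp add: bij_is_inj finite_UNIV_inj_surj)
  then have "surj rho"
    unfolding rho_def using \<open>in_GL (lam h)\<close> by (intro comp_surj) (auto simp: in_GL_def bij_is_surj)
  moreover have "U = {0} \<or> U = UNIV"
    if "vec.subspace U" and "\<And>x u. u \<in> U \<Longrightarrow> rho (x + u) + rho x \<in> U" for U
    using bij zero assms(6-9) mixing that unfolding rho_def comp_def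
    by (intro derivative_invariant_subspace_trivial[where gs = "g h" and lam = "lam h" and r = r])
      (auto simp: bij_is_inj)
  ultimately have "primitive_group (Gamma_round g lam phi h)"
    unfolding Gamma_round_def rounds by (rule primitive_group_translates)
  moreover have "Gamma_round g lam phi h \<subseteq> Gamma_inf l g lam phi"
    unfolding Gamma_round_def Gamma_inf_def using assms(4) by (intro perm_group_gen_mono) blast
  ultimately show ?thesis by (auto intro: primitive_group_mono)
qed

end
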